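(* There exists $\delta_0>0$ such that for every $0\le \delta<\delta_0$ the following holds: there exists $\varepsilon=\varepsilon(\delta)>0$ such that for every Boolean function $f:\{0,1\}^n\to\{0,1\}$ (any $n$) there exists a $\delta$-noisy circuit $C$ composed of 3MIN gates with $n$ inputs such that for all $(x_1,\dots,x_n)\in\{0,1\}^n$, $\mathbb{P}(C(x_1,\dots,x_n)\neq f(x_1,\dots,x_n))\le\frac12-\varepsilon$. That is, provided $\delta$ is sufficiently small, any Boolean function can be reliably computed by a $\delta$-noisy circuit composed of 3-input minority gates.
   Context: A Boolean circuit is a directed acyclic graph whose source nodes are either input variables $x_1,\dots,x_n$ or constants $0$ or $1$ (constants are noiseless), whose other vertices are logic gates computing a Boolean function of their incoming edges and sending the result along all outgoing edges, and which has a single sink, the output. A 3MIN (3-input minority) gate outputs $1$ if at most one of its three inputs equals $1$, and $0$ otherwise (the negation of majority). A gate is $\delta$-noisy if, given its inputs, it outputs the wrong value with probability $\delta$; a $\delta$-noisy circuit has all gates $\delta$-noisy, malfunctioning independently. *)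

theory Defs
  imports Complex_Main
begin

datatype wire = Var nat | Const bool | Gate nat

text \<open>A 3MIN gate is given by its three input wires.  A circuit is the list of its
  gates in topological order; its output (the sink) is the last gate.\<close>
type_synonym gate = "wire \<times> wire \<times> wire"
type_synonym circuit = "gate list"

definition min3 :: "bool \<Rightarrow> bool \<Rightarrow> bool \<Rightarrow> bool" where
  "min3 a b c = (\<not> ((a \<and> b) \<or> (a \<and> c) \<or> (b \<and> c)))"

definition wire_ok :: "nat \<Rightarrow> nat \<Rightarrow> wire \<Rightarrow> bool" where
  "wire_ok n j w = (case w of Var i \<Rightarrow> i < n | Const b \<Rightarrow> True | Gate k \<Rightarrow> k < j)"

definition wf_circuit :: "nat \<Rightarrow> circuit \<Rightarrow> bool" where
  "wf_circuit n C = (C \<noteq> [] \<and>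
     (\<forall>j < length C. case C ! j of (a, b, c) \<Rightarrow>
        wire_ok n j a \<and> wire_ok n j b \<and> wire_ok n j c))"

definition wire_val :: "bool list \<Rightarrow> bool list \<Rightarrow> wire \<Rightarrow> bool" where
  "wire_val xs vs w = (case w of Var i \<Rightarrow> xs ! i | Const b \<Rightarrow> b | Gate k \<Rightarrow> vs ! k)"

text \<open>Evaluation under an error pattern es: gate j outputs the negation of the
  correct 3MIN value iff es ! j.  vs accumulates the gate values computed so far.\<close>
fun run :: "bool list \<Rightarrow> bool list \<Rightarrow> circuit \<Rightarrow> bool list \<Rightarrow> bool list" where
  "run xs es [] vs = vs"
| "run xs es ((a, b, c) # gs) vs =
     run xs es gs (vs @ [min3 (wire_val xs vs a) (wire_val xs vs b) (wire_val xs vs c) \<noteq> es ! length vs])"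

definition circ_out :: "circuit \<Rightarrow> bool list \<Rightarrow> bool list \<Rightarrow> bool" where
  "circ_out C xs es = last (run xs es C [])"

definition pattern_prob :: "real \<Rightarrow> bool list \<Rightarrow> real" where
  "pattern_prob \<delta> es = (\<Prod>i<length es. if es ! i then \<delta> else 1 - \<delta>)"

definition err_prob :: "real \<Rightarrow> circuit \<Rightarrow> (bool list \<Rightarrow> bool) \<Rightarrow> bool list \<Rightarrow> real" where
  "err_prob \<delta> C f xs =
     (\<Sum>es \<in> {es. length es = length C \<and> circ_out C xs es \<noteq> f xs}. pattern_prob \<delta> es)"

end

theory Submission
  imports Defs
begin

text \<open>
  Every Boolean function is computed by a formula of 3MIN gates, via NOT x = MIN(x, 1, 0),
  NAND(x, y) = MIN(x, y, 0) and Shannon expansion.  Compiled as a tree, such a formula has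
  independent noise in disjoint subformulas, so the probability that a subformula outputs 1 obeys
  a recursion through the polynomial min3_prob.  Applying 3MIN to three independent copies of a
  signal that is wrong with probability e negates it and leaves it wrong with probability at most
  3 e^2 + \<delta>.  Replacing every gate g by two such rounds applied to copies of g therefore
  brings the error 7\<delta> of g (three inputs each wrong with probability at most 2\<delta>, plus its own
  noise) down to 3 (7\<delta>)^2 + \<delta> \<le> 2\<delta> and then to 3 (2\<delta>)^2 + \<delta> \<le> 2\<delta> once \<delta> \<le> 1/200.
  By induction every formula is computed with error at most 2\<delta> < 1/4.
\<close>

section \<open>Formulas of 3MIN gates and their compilation into circuits\<close>

datatype formula = FVar nat | FConst bool | FMin3 formula formula formula

fun gate_count :: "formula \<Rightarrow> nat" where
  "gate_count (FVar i) = 0"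
| "gate_count (FConst b) = 0"
| "gate_count (FMin3 a b c) = Suc (gate_count a + gate_count b + gate_count c)"

fun vars :: "formula \<Rightarrow> nat set" where
  "vars (FVar i) = {i}"
| "vars (FConst b) = {}"
| "vars (FMin3 a b c) = vars a \<union> vars b \<union> vars c"

fun formula_val :: "bool list \<Rightarrow> formula \<Rightarrow> bool" where
  "formula_val xs (FVar i) = xs ! i"
| "formula_val xs (FConst b) = b"
| "formula_val xs (FMin3 a b c) = min3 (formula_val xs a) (formula_val xs b) (formula_val xs c)"

text \<open>The error bits of FMin3 a b c are those of a, then those of b, then those of c, and
  finally the bit of the gate itself; compile numbers the gates in the same post-order.\<close>

fun noisy_val :: "bool list \<Rightarrow> formula \<Rightarrow> bool list \<Rightarrow> bool" where
  "noisy_val xs (FVar i) es = xs ! i"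
| "noisy_val xs (FConst b) es = b"
| "noisy_val xs (FMin3 a b c) es =
     (min3 (noisy_val xs a es) (noisy_val xs b (drop (gate_count a) es))
        (noisy_val xs c (drop (gate_count a + gate_count b) es))
      \<noteq> es ! (gate_count a + gate_count b + gate_count c))"

lemma formula_val_append:
  "vars t \<subseteq> {..<length ys} \<Longrightarrow> formula_val (ys @ zs) t = formula_val ys t"
  by (induction t) (auto simp: nth_append)

lemma noisy_val_append:
  "gate_count t \<le> length es \<Longrightarrow> noisy_val xs t (es @ more) = noisy_val xs t es"
  by (induction t arbitrary: es) (auto simp: nth_append)

lemma noisy_val_take:
  "gate_count t \<le> length es \<Longrightarrow> noisy_val xs t (take (gate_count t) es) = noisy_val xs t es"
  using noisy_val_append[of t "take (gate_count t) es" xs "drop (gate_count t) es"] by simp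

fun out_wire :: "formula \<Rightarrow> nat \<Rightarrow> wire" where
  "out_wire (FVar i) off = Var i"
| "out_wire (FConst b) off = Const b"
| "out_wire (FMin3 a b c) off = Gate (off + gate_count a + gate_count b + gate_count c)"

fun compile :: "formula \<Rightarrow> nat \<Rightarrow> circuit" where
  "compile (FVar i) off = []"
| "compile (FConst b) off = []"
| "compile (FMin3 a b c) off =
     compile a off @ compile b (off + gate_count a) @ compile c (off + gate_count a + gate_count b) @
     [(out_wire a off, out_wire b (off + gate_count a),
       out_wire c (off + gate_count a + gate_count b))]"

lemma length_compile [simp]: "length (compile t off) = gate_count t"
  by (induction t arbitrary: off) auto

lemma all_nth_append:
  "(\<forall>j < length (xs @ ys). P j ((xs @ ys) ! j)) \<longleftrightarrow>
     (\<forall>j < length xs. P j (xs ! j)) \<and> (\<forall>j < length ys. P (length xs + j) (ys ! j))"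
  (is "?l \<longleftrightarrow> ?r")
proof
  assume l: ?l
  have "P j (xs ! j)" if "j < length xs" for j
    using l[rule_format, of j] that by (simp add: nth_append)
  moreover have "P (length xs + j) (ys ! j)" if "j < length ys" for j
    using l[rule_format, of "length xs + j"] that by (simp add: nth_append)
  ultimately show ?r by blast
next
  assume r: ?r
  show ?l
  proof (intro allI impI)
    fix j assume "j < length (xs @ ys)"
    then show "P j ((xs @ ys) ! j)"
      using r by (cases "j < length xs") (auto simp: nth_append dest!: spec[of _ "j - length xs"])
  qed
qed

definition gate_ok :: "nat \<Rightarrow> nat \<Rightarrow> gate \<Rightarrow> bool" where
  "gate_ok n j g = (case g of (a, b, c) \<Rightarrow> wire_ok n j a \<and> wire_ok n j b \<and> wire_ok n j c)"

definition gates_ok :: "nat \<Rightarrow> nat \<Rightarrow> circuit \<Rightarrow> bool" where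
  "gates_ok n off gs = (\<forall>j < length gs. gate_ok n (off + j) (gs ! j))"

lemma gates_ok_append:
  "gates_ok n off (gs @ hs) \<longleftrightarrow> gates_ok n off gs \<and> gates_ok n (off + length gs) hs"
  using all_nth_append[of gs hs "\<lambda>j. gate_ok n (off + j)"] by (simp add: gates_ok_def add.assoc)

lemma gates_ok_single [simp]: "gates_ok n off [g] = gate_ok n off g"
  by (simp add: gates_ok_def)

lemma wf_circuit_iff: "wf_circuit n C \<longleftrightarrow> C \<noteq> [] \<and> gates_ok n 0 C"
  by (simp add: wf_circuit_def gates_ok_def gate_ok_def)

lemma wire_ok_mono: "wire_ok n j w \<Longrightarrow> j \<le> k \<Longrightarrow> wire_ok n k w"
  by (auto simp: wire_ok_def split: wire.splits)

lemma gates_ok_compile: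
  "vars t \<subseteq> {..<n} \<Longrightarrow>
     gates_ok n off (compile t off) \<and> wire_ok n (off + gate_count t) (out_wire t off)"
proof (induction t arbitrary: off)
  case (FMin3 a b c)
  let ?k = "off + gate_count a + gate_count b + gate_count c"
  have a: "gates_ok n off (compile a off)" "wire_ok n (off + gate_count a) (out_wire a off)"
    using FMin3.IH(1)[of off] FMin3.prems by auto
  have b: "gates_ok n (off + gate_count a) (compile b (off + gate_count a))"
    "wire_ok n (off + gate_count a + gate_count b) (out_wire b (off + gate_count a))"
    using FMin3.IH(2)[of "off + gate_count a"] FMin3.prems by auto
  have c: "gates_ok n (off + gate_count a + gate_count b) (compile c (off + gate_count a + gate_count b))"
    "wire_ok n ?k (out_wire c (off + gate_count a + gate_count b))"
    using FMin3.IH(3)[of "off + gate_count a + gate_count b"] FMin3.prems by auto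
  have "wire_ok n ?k (out_wire a off)" "wire_ok n ?k (out_wire b (off + gate_count a))"
    using a(2) b(2) by (auto elim: wire_ok_mono)
  then show ?case
    using a b c by (simp add: gates_ok_append gate_ok_def add.assoc) (simp add: wire_ok_def)
qed (auto simp: wire_ok_def gates_ok_def)

lemma wf_circuit_compile: "vars t \<subseteq> {..<n} \<Longrightarrow> 0 < gate_count t \<Longrightarrow> wf_circuit n (compile t 0)"
  using gates_ok_compile[of t n 0] by (auto simp: wf_circuit_iff simp flip: length_0_conv)

lemma run_append: "run xs es (gs @ hs) vs = run xs es hs (run xs es gs vs)"
proof (induction gs arbitrary: vs)
  case (Cons g gs)
  then show ?case by (cases g) auto
qed simp

lemma run_compile:
  assumes "length vs = off" "off + gate_count t \<le> length es"
  shows "\<exists>R. run xs es (compile t off) vs = vs @ R \<and> length R = gate_count t \<and>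
     (\<forall>W. wire_val xs (vs @ R @ W) (out_wire t off) = noisy_val xs t (drop off es))"
  using assms
proof (induction t arbitrary: off vs)
  case (FMin3 a b c)
  let ?offb = "off + gate_count a" and ?offc = "off + gate_count a + gate_count b"
  obtain Ra where a: "run xs es (compile a off) vs = vs @ Ra" "length Ra = gate_count a"
    "\<And>W. wire_val xs (vs @ Ra @ W) (out_wire a off) = noisy_val xs a (drop off es)"
    using FMin3.IH(1)[of vs off] FMin3.prems by auto
  obtain Rb where b: "run xs es (compile b ?offb) (vs @ Ra) = vs @ Ra @ Rb" "length Rb = gate_count b"
    "\<And>W. wire_val xs (vs @ Ra @ Rb @ W) (out_wire b ?offb) = noisy_val xs b (drop ?offb es)"
    using FMin3.IH(2)[of "vs @ Ra" ?offb] FMin3.prems a by auto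
  obtain Rc where c: "run xs es (compile c ?offc) (vs @ Ra @ Rb) = vs @ Ra @ Rb @ Rc"
    "length Rc = gate_count c"
    "\<And>W. wire_val xs (vs @ Ra @ Rb @ Rc @ W) (out_wire c ?offc) = noisy_val xs c (drop ?offc es)"
    using FMin3.IH(3)[of "vs @ Ra @ Rb" ?offc] FMin3.prems a b by auto
  define v where "v = noisy_val xs (FMin3 a b c) (drop off es)"
  have "run xs es (compile (FMin3 a b c) off) vs = vs @ Ra @ Rb @ Rc @ [v]"
    using a b c a(3)[of "Rb @ Rc"] b(3)[of Rc] c(3)[of "[]"] FMin3.prems
    by (simp add: run_append v_def ac_simps)
  moreover have "wire_val xs ((vs @ Ra @ Rb @ Rc @ [v]) @ W) (out_wire (FMin3 a b c) off) = v" for W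
    using a(2) b(2) c(2) FMin3.prems by (simp add: wire_val_def nth_append)
  ultimately show ?case
    using a(2) b(2) c(2)
    by (intro exI[of _ "Ra @ Rb @ Rc @ [v]"]) (simp add: v_def del: noisy_val.simps)
qed (auto simp: wire_val_def)

lemma circ_out_compile:
  assumes "0 < gate_count t" "length es = gate_count t"
  shows "circ_out (compile t 0) xs es = noisy_val xs t es"
proof -
  from run_compile[of "[]" 0 t es xs] assms(2)
  obtain R where R: "run xs es (compile t 0) [] = R" "length R = gate_count t"
     "\<And>W. wire_val xs (R @ W) (out_wire t 0) = noisy_val xs t es"
    by auto
  have "wire_val xs R (out_wire t 0) = last R"
    using R(2) assms(1) last_conv_nth[of R]
    by (cases t) (auto simp: wire_val_def simp flip: length_0_conv)
  then show ?thesis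
    using R(1) R(3)[of "[]"] by (simp add: circ_out_def)
qed

section \<open>Expectations over error patterns\<close>

lemma pattern_prob_Nil [simp]: "pattern_prob d [] = 1"
  by (simp add: pattern_prob_def)

lemma pattern_prob_Cons [simp]:
  "pattern_prob d (e # es) = (if e then d else 1 - d) * pattern_prob d es"
  unfolding pattern_prob_def by (simp only: length_Cons prod.lessThan_Suc_shift) simp

lemma pattern_prob_append: "pattern_prob d (es @ fs) = pattern_prob d es * pattern_prob d fs"
  by (induction es) auto

lemma pattern_prob_nonneg: "0 \<le> d \<Longrightarrow> d \<le> 1 \<Longrightarrow> 0 \<le> pattern_prob d es"
  unfolding pattern_prob_def by (rule prod_nonneg) auto

definition pattern_expectation :: "real \<Rightarrow> nat \<Rightarrow> (bool list \<Rightarrow> real) \<Rightarrow> real" where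
  "pattern_expectation d n h = (\<Sum>es \<in> {es. length es = n}. pattern_prob d es * h es)"

lemma finite_patterns: "finite {es :: bool list. length es = n}"
  using finite_lists_length_eq[of "UNIV :: bool set" n] by simp

lemma err_prob_eq_pattern_expectation:
  "err_prob d C f xs = pattern_expectation d (length C) (\<lambda>es. of_bool (circ_out C xs es \<noteq> f xs))"
  unfolding err_prob_def pattern_expectation_def
  using sum.inter_filter[OF finite_patterns,
      where g = "pattern_prob d" and P = "\<lambda>es. circ_out C xs es \<noteq> f xs"]
  by (auto simp: conj_commute intro!: sum.cong)

lemma pattern_expectation_cong:
  "(\<And>es. length es = n \<Longrightarrow> h es = g es) \<Longrightarrow> pattern_expectation d n h = pattern_expectation d n g"
  unfolding pattern_expectation_def by (rule sum.cong) auto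

lemma pattern_expectation_0 [simp]: "pattern_expectation d 0 h = h []"
  by (simp add: pattern_expectation_def)

lemma pattern_expectation_1: "pattern_expectation d 1 h = (1 - d) * h [False] + d * h [True]"
proof -
  have "{es :: bool list. length es = 1} = {[False], [True]}"
    by (auto simp: length_Suc_conv)
  then show ?thesis by (simp add: pattern_expectation_def)
qed

lemma pattern_expectation_add:
  "pattern_expectation d (n + m) h =
     pattern_expectation d n (\<lambda>es. pattern_expectation d m (\<lambda>fs. h (es @ fs)))"
proof -
  let ?A = "{es :: bool list. length es = n}" and ?B = "{fs :: bool list. length fs = m}"
  have bij: "bij_betw (\<lambda>(es, fs). es @ fs) (?A \<times> ?B) {es. length es = n + m}"
    unfolding bij_betw_def
  proof
    show "inj_on (\<lambda>(es, fs). es @ fs) (?A \<times> ?B)"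
      by (auto simp: inj_on_def)
    show "(\<lambda>(es, fs). es @ fs) ` (?A \<times> ?B) = {es. length es = n + m}"
    proof (intro equalityI subsetI)
      fix es :: "bool list" assume "es \<in> {es. length es = n + m}"
      then have "(take n es, drop n es) \<in> ?A \<times> ?B" by auto
      then show "es \<in> (\<lambda>(es, fs). es @ fs) ` (?A \<times> ?B)"
        by (rule rev_image_eqI) simp
    qed auto
  qed
  have "pattern_expectation d (n + m) h =
      (\<Sum>(es, fs) \<in> ?A \<times> ?B. pattern_prob d (es @ fs) * h (es @ fs))"
    unfolding pattern_expectation_def
    using sum.reindex_bij_betw[OF bij, of "\<lambda>es. pattern_prob d es * h es"] by (simp add: split_def)
  also have "\<dots> = (\<Sum>es \<in> ?A. \<Sum>fs \<in> ?B. pattern_prob d (es @ fs) * h (es @ fs))"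
    by (rule sum.cartesian_product[symmetric])
  finally show ?thesis
    by (simp add: pattern_expectation_def pattern_prob_append sum_distrib_left mult.assoc)
qed

lemma pattern_expectation_const_1 [simp]: "pattern_expectation d n (\<lambda>_. 1) = 1"
proof (induction n)
  case (Suc n)
  then show ?case
    using pattern_expectation_add[of d n 1 "\<lambda>_. 1"] pattern_expectation_1[of d "\<lambda>_. 1"] by simp
qed simp

lemma pattern_expectation_nonneg_le_1:
  assumes "0 \<le> d" "d \<le> 1" "\<And>es. 0 \<le> h es \<and> h es \<le> 1"
  shows "0 \<le> pattern_expectation d n h \<and> pattern_expectation d n h \<le> 1"
proof
  show "0 \<le> pattern_expectation d n h"
    unfolding pattern_expectation_def using assms pattern_prob_nonneg by (intro sum_nonneg) auto
  have "pattern_expectation d n h \<le> pattern_expectation d n (\<lambda>_. 1)"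
    unfolding pattern_expectation_def using assms pattern_prob_nonneg
    by (intro sum_mono) (simp add: mult_left_le)
  then show "pattern_expectation d n h \<le> 1" by simp
qed

lemma pattern_expectation_bool:
  "pattern_expectation d n (\<lambda>es. \<phi> (P es)) =
     p * \<phi> True + (1 - p) * \<phi> False" if "p = pattern_expectation d n (\<lambda>es. of_bool (P es))"
proof -
  have "pattern_expectation d n (\<lambda>es. \<phi> (P es)) =
      pattern_expectation d n (\<lambda>es. \<phi> True * of_bool (P es) + \<phi> False * (1 - of_bool (P es)))"
    by (rule pattern_expectation_cong) auto
  also have "\<dots> = \<phi> True * p + \<phi> False * (pattern_expectation d n (\<lambda>_. 1) - p)"
    unfolding that pattern_expectation_def
    by (simp add: algebra_simps sum.distrib sum_distrib_left sum_subtractf)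
  finally show ?thesis by (simp add: mult.commute)
qed

lemma pattern_expectation_condition:
  "pattern_expectation d (n + m) (\<lambda>es. \<phi> (P (take n es)) (drop n es)) =
     p * pattern_expectation d m (\<phi> True) + (1 - p) * pattern_expectation d m (\<phi> False)"
  if "p = pattern_expectation d n (\<lambda>es. of_bool (P es))"
proof -
  have "pattern_expectation d (n + m) (\<lambda>es. \<phi> (P (take n es)) (drop n es)) =
      pattern_expectation d n (\<lambda>es. pattern_expectation d m (\<phi> (P es)))"
    unfolding pattern_expectation_add by (rule pattern_expectation_cong) simp
  then show ?thesis using pattern_expectation_bool[OF that] by simp
qed

section \<open>Error analysis of noisy formulas\<close>

definition min3_prob :: "real \<Rightarrow> real \<Rightarrow> real \<Rightarrow> real" where
  "min3_prob a b c = (1-a)*(1-b)*(1-c) + a*(1-b)*(1-c) + (1-a)*b*(1-c) + (1-a)*(1-b)*c"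

definition noisy_prob :: "real \<Rightarrow> real \<Rightarrow> real" where
  "noisy_prob d m = (1 - d) * m + d * (1 - m)"

definition prob_true :: "real \<Rightarrow> bool list \<Rightarrow> formula \<Rightarrow> real" where
  "prob_true d xs t = pattern_expectation d (gate_count t) (\<lambda>es. of_bool (noisy_val xs t es))"

lemma prob_true_FVar [simp]: "prob_true d xs (FVar i) = of_bool (xs ! i)"
  by (simp add: prob_true_def)

lemma prob_true_FConst [simp]: "prob_true d xs (FConst b) = of_bool b"
  by (simp add: prob_true_def)

lemma prob_true_FMin3:
  "prob_true d xs (FMin3 a b c) =
     noisy_prob d (min3_prob (prob_true d xs a) (prob_true d xs b) (prob_true d xs c))"
proof -
  let ?ga = "gate_count a" and ?gb = "gate_count b" and ?gc = "gate_count c"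
  \<comment> \<open>Condition on the outputs of a, b and c in turn: they read disjoint blocks of error bits.\<close>
  define gate_out where "gate_out = (\<lambda>u v w (es :: bool list). of_bool (min3 u v w \<noteq> es ! 0) :: real)"
  define after_b where
    "after_b = (\<lambda>u v es. gate_out u v (noisy_val xs c (take ?gc es)) (drop ?gc es))"
  define after_a where
    "after_a = (\<lambda>u es. after_b u (noisy_val xs b (take ?gb es)) (drop ?gb es))"
  have "prob_true d xs (FMin3 a b c) = pattern_expectation d (?ga + (?gb + (?gc + 1)))
      (\<lambda>es. of_bool (noisy_val xs (FMin3 a b c) es))"
    by (simp only: prob_true_def gate_count.simps) (simp add: add.assoc)
  also have "\<dots> = pattern_expectation d (?ga + (?gb + (?gc + 1)))
      (\<lambda>es. after_a (noisy_val xs a (take ?ga es)) (drop ?ga es))"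
    by (rule pattern_expectation_cong)
      (simp add: after_a_def after_b_def gate_out_def noisy_val_take ac_simps)
  also have "\<dots> = prob_true d xs a * pattern_expectation d (?gb + (?gc + 1)) (after_a True)
      + (1 - prob_true d xs a) * pattern_expectation d (?gb + (?gc + 1)) (after_a False)"
    by (rule pattern_expectation_condition) (simp add: prob_true_def)
  finally have split_a: "prob_true d xs (FMin3 a b c) = \<dots>" .
  have split_b: "pattern_expectation d (?gb + (?gc + 1)) (after_a u) =
      prob_true d xs b * pattern_expectation d (?gc + 1) (after_b u True)
      + (1 - prob_true d xs b) * pattern_expectation d (?gc + 1) (after_b u False)" for u
    unfolding after_a_def by (rule pattern_expectation_condition) (simp add: prob_true_def)
  have split_c: "pattern_expectation d (?gc + 1) (after_b u v) =
      prob_true d xs c * pattern_expectation d 1 (gate_out u v True)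
      + (1 - prob_true d xs c) * pattern_expectation d 1 (gate_out u v False)" for u v
    unfolding after_b_def by (rule pattern_expectation_condition) (simp add: prob_true_def)
  have gate: "pattern_expectation d 1 (gate_out u v w) = noisy_prob d (of_bool (min3 u v w))"
    for u v w
    unfolding pattern_expectation_1 by (simp add: gate_out_def noisy_prob_def)
  show ?thesis
    unfolding split_a split_b split_c gate
    by (simp add: noisy_prob_def min3_prob_def min3_def algebra_simps)
qed

lemma prob_true_bounds: "0 \<le> d \<Longrightarrow> d \<le> 1 \<Longrightarrow> 0 \<le> prob_true d xs t \<and> prob_true d xs t \<le> 1"
  unfolding prob_true_def by (rule pattern_expectation_nonneg_le_1) auto

lemma min3_prob_of_bool: "min3_prob (of_bool u) (of_bool v) (of_bool w) = of_bool (min3 u v w)"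
  by (cases u; cases v; cases w) (simp_all add: min3_prob_def min3_def)

lemma min3_prob_commute: "min3_prob a b c = min3_prob b a c" "min3_prob a b c = min3_prob c b a"
  unfolding min3_prob_def by algebra+

lemma min3_prob_lipschitz1:
  assumes "0 \<le> b" "b \<le> 1" "0 \<le> c" "c \<le> 1"
  shows "\<bar>min3_prob a b c - min3_prob a' b c\<bar> \<le> \<bar>a - a'\<bar>"
proof -
  have diff: "min3_prob a b c - min3_prob a' b c = (a - a') * - (b * (1 - c) + c * (1 - b))"
    unfolding min3_prob_def by algebra
  have "0 \<le> b * (1 - c) + c * (1 - b)"
    using assms by simp
  moreover have "b * (1 - c) + c * (1 - b) \<le> 1 * (1 - c) + c * 1"
    using assms by (intro add_mono mult_right_mono mult_left_mono) auto
  ultimately have "\<bar>a - a'\<bar> * \<bar>b * (1 - c) + c * (1 - b)\<bar> \<le> \<bar>a - a'\<bar> * 1"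
    by (intro mult_left_mono) auto
  then show ?thesis unfolding diff abs_mult abs_minus_cancel by simp
qed

lemma min3_prob_lipschitz:
  assumes "\<And>x. x \<in> {a, b, c, a', b', c'} \<Longrightarrow> 0 \<le> x \<and> x \<le> 1"
  shows "\<bar>min3_prob a b c - min3_prob a' b' c'\<bar> \<le> \<bar>a - a'\<bar> + \<bar>b - b'\<bar> + \<bar>c - c'\<bar>"
proof -
  have "\<bar>min3_prob a b c - min3_prob a' b c\<bar> \<le> \<bar>a - a'\<bar>"
    using assms by (intro min3_prob_lipschitz1) auto
  moreover have "\<bar>min3_prob a' b c - min3_prob a' b' c\<bar> \<le> \<bar>b - b'\<bar>"
    using assms min3_prob_lipschitz1[of a' c b b'] by (simp add: min3_prob_commute(1)[of _ a'])
  moreover have "\<bar>min3_prob a' b' c - min3_prob a' b' c'\<bar> \<le> \<bar>c - c'\<bar>"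
    using assms min3_prob_lipschitz1[of b' a' c c'] by (simp add: min3_prob_commute(2)[of _ b'])
  ultimately show ?thesis by linarith
qed

lemma min3_prob_bounds:
  assumes "0 \<le> a" "a \<le> 1" "0 \<le> b" "b \<le> 1" "0 \<le> c" "c \<le> 1"
  shows "0 \<le> min3_prob a b c \<and> min3_prob a b c \<le> 1"
proof
  show "0 \<le> min3_prob a b c"
    unfolding min3_prob_def using assms by (intro add_nonneg_nonneg mult_nonneg_nonneg) auto
  have "1 - min3_prob a b c = a*b*(1-c) + a*(1-b)*c + (1-a)*b*c + a*b*c"
    unfolding min3_prob_def by algebra
  moreover have "0 \<le> a*b*(1-c) + a*(1-b)*c + (1-a)*b*c + a*b*c"
    using assms by (intro add_nonneg_nonneg mult_nonneg_nonneg) auto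
  ultimately show "min3_prob a b c \<le> 1" by linarith
qed

lemma min3_prob_diag_dist:
  assumes "0 \<le> a" "a \<le> 1" "\<bar>a - of_bool v\<bar> \<le> e"
  shows "\<bar>min3_prob a a a - of_bool (\<not> v)\<bar> \<le> 3 * e\<^sup>2"
proof (cases v)
  case True
  have "min3_prob a a a = (1 - a)\<^sup>2 * (1 + 2 * a)"
    unfolding min3_prob_def by algebra
  moreover have "(1 - a)\<^sup>2 \<le> e\<^sup>2"
    using True assms by (intro power_mono) auto
  moreover have "(1 - a)\<^sup>2 * (1 + 2 * a) \<le> e\<^sup>2 * 3"
    using calculation(2) assms by (intro mult_mono) auto
  moreover have "0 \<le> (1 - a)\<^sup>2 * (1 + 2 * a)"
    using assms by simp
  ultimately show ?thesis
    using True by simp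
next
  case False
  have "1 - min3_prob a a a = a\<^sup>2 * (3 - 2 * a)"
    unfolding min3_prob_def by algebra
  moreover have "a\<^sup>2 \<le> e\<^sup>2"
    using False assms by (intro power_mono) auto
  moreover have "a\<^sup>2 * (3 - 2 * a) \<le> e\<^sup>2 * 3"
    using calculation(2) assms by (intro mult_mono) auto
  moreover have "0 \<le> a\<^sup>2 * (3 - 2 * a)"
    using assms by simp
  ultimately show ?thesis
    using False by (simp add: abs_minus_commute[of "min3_prob a a a"])
qed

lemma noisy_prob_dist:
  assumes "0 \<le> m" "m \<le> 1" "0 \<le> d"
  shows "\<bar>noisy_prob d m - w\<bar> \<le> \<bar>m - w\<bar> + d"
proof -
  have "d * \<bar>1 - 2 * m\<bar> \<le> d * 1"
    using assms by (intro mult_left_mono) auto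
  then have "\<bar>d * (1 - 2 * m)\<bar> \<le> d"
    using assms by (simp add: abs_mult)
  moreover have "noisy_prob d m - w = (m - w) + d * (1 - 2 * m)"
    by (simp add: noisy_prob_def algebra_simps)
  ultimately show ?thesis by linarith
qed

lemma prob_true_FMin3_dist:
  assumes "0 \<le> d" "d \<le> 1"
    and "\<bar>prob_true d xs a - of_bool u\<bar> \<le> ea"
    and "\<bar>prob_true d xs b - of_bool v\<bar> \<le> eb"
    and "\<bar>prob_true d xs c - of_bool w\<bar> \<le> ec"
  shows "\<bar>prob_true d xs (FMin3 a b c) - of_bool (min3 u v w)\<bar> \<le> ea + eb + ec + d"
proof -
  let ?m = "min3_prob (prob_true d xs a) (prob_true d xs b) (prob_true d xs c)"
  have "\<And>x. x \<in> {prob_true d xs a, prob_true d xs b, prob_true d xs c,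
      of_bool u, of_bool v, of_bool w} \<Longrightarrow> 0 \<le> x \<and> x \<le> 1"
    using prob_true_bounds[OF assms(1,2)] by auto
  then have "\<bar>?m - min3_prob (of_bool u) (of_bool v) (of_bool w)\<bar>
      \<le> \<bar>prob_true d xs a - of_bool u\<bar> + \<bar>prob_true d xs b - of_bool v\<bar>
        + \<bar>prob_true d xs c - of_bool w\<bar>"
    by (rule min3_prob_lipschitz)
  then have "\<bar>?m - of_bool (min3 u v w)\<bar> \<le> ea + eb + ec"
    using assms(3-5) by (simp add: min3_prob_of_bool)
  moreover have "0 \<le> ?m" "?m \<le> 1"
    using min3_prob_bounds prob_true_bounds[OF assms(1,2)] by auto
  ultimately show ?thesis
    using noisy_prob_dist[of ?m d "of_bool (min3 u v w)"] assms(1) by (simp add: prob_true_FMin3)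
qed

lemma prob_true_triplicate_dist:
  assumes "0 \<le> d" "d \<le> 1" "\<bar>prob_true d xs s - of_bool v\<bar> \<le> e"
  shows "\<bar>prob_true d xs (FMin3 s s s) - of_bool (\<not> v)\<bar> \<le> 3 * e\<^sup>2 + d"
proof -
  let ?p = "prob_true d xs s"
  have "0 \<le> ?p" "?p \<le> 1"
    using prob_true_bounds[OF assms(1,2)] by auto
  then have "\<bar>min3_prob ?p ?p ?p - of_bool (\<not> v)\<bar> \<le> 3 * e\<^sup>2"
    "0 \<le> min3_prob ?p ?p ?p" "min3_prob ?p ?p ?p \<le> 1"
    using min3_prob_diag_dist[OF _ _ assms(3)] min3_prob_bounds by auto
  then show ?thesis
    using noisy_prob_dist[of "min3_prob ?p ?p ?p" d "of_bool (\<not> v)"] assms(1)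
    by (simp add: prob_true_FMin3)
qed

definition amplify :: "formula \<Rightarrow> formula" where
  "amplify s = FMin3 (FMin3 s s s) (FMin3 s s s) (FMin3 s s s)"

fun robust :: "formula \<Rightarrow> formula" where
  "robust (FVar i) = FVar i"
| "robust (FConst b) = FConst b"
| "robust (FMin3 a b c) = amplify (FMin3 (robust a) (robust b) (robust c))"

lemma vars_robust [simp]: "vars (robust t) = vars t"
  by (induction t) (auto simp: amplify_def)

lemma gate_count_robust_pos: "0 < gate_count t \<Longrightarrow> 0 < gate_count (robust t)"
  by (cases t) (auto simp: amplify_def)

lemma prob_true_robust:
  assumes "0 \<le> d" "d \<le> 1/200"
  shows "\<bar>prob_true d xs (robust t) - of_bool (formula_val xs t)\<bar> \<le> 2 * d"
proof (induction t)
  case (FMin3 a b c)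
  have d: "0 \<le> d" "d \<le> 1" using assms by auto
  have sq: "k * d\<^sup>2 \<le> d" if "k \<le> 200" for k :: real
  proof -
    have "k * d\<^sup>2 \<le> 200 * d\<^sup>2"
      using that by (intro mult_right_mono) simp_all
    also have "\<dots> = d * (200 * d)"
      by (simp add: power2_eq_square)
    also have "\<dots> \<le> d" using assms by (simp add: mult_left_le)
    finally show ?thesis .
  qed
  let ?s = "FMin3 (robust a) (robust b) (robust c)" and ?w = "formula_val xs (FMin3 a b c)"
  have "\<bar>prob_true d xs ?s - of_bool ?w\<bar> \<le> 7 * d"
    using prob_true_FMin3_dist[OF d FMin3.IH] by simp
  then have "\<bar>prob_true d xs (FMin3 ?s ?s ?s) - of_bool (\<not> ?w)\<bar> \<le> 3 * (7 * d)\<^sup>2 + d"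
    by (rule prob_true_triplicate_dist[OF d])
  also have "\<dots> \<le> 2 * d"
    using sq[of 147] by (simp add: power_mult_distrib)
  finally have "\<bar>prob_true d xs (amplify ?s) - of_bool (\<not> \<not> ?w)\<bar> \<le> 3 * (2 * d)\<^sup>2 + d"
    unfolding amplify_def by (rule prob_true_triplicate_dist[OF d])
  also have "\<dots> \<le> 2 * d"
    using sq[of 12] by (simp add: power_mult_distrib)
  finally show ?case by simp
qed (use assms in auto)

lemma err_prob_compile:
  assumes "0 \<le> d" "d \<le> 1" "0 < gate_count t"
  shows "err_prob d (compile t 0) f xs = \<bar>prob_true d xs t - of_bool (f xs)\<bar>"
proof -
  have "err_prob d (compile t 0) f xs =
      pattern_expectation d (gate_count t) (\<lambda>es. of_bool (noisy_val xs t es \<noteq> f xs))"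
    unfolding err_prob_eq_pattern_expectation length_compile
    by (rule pattern_expectation_cong) (simp add: circ_out_compile assms(3))
  also have "\<dots> = prob_true d xs t * of_bool (True \<noteq> f xs)
      + (1 - prob_true d xs t) * of_bool (False \<noteq> f xs)"
    by (rule pattern_expectation_bool[where \<phi> = "\<lambda>u. of_bool (u \<noteq> f xs)"]) (simp add: prob_true_def)
  also have "\<dots> = \<bar>prob_true d xs t - of_bool (f xs)\<bar>"
    using prob_true_bounds[OF assms(1,2), of xs t] by (cases "f xs") auto
  finally show ?thesis .
qed

section \<open>Formulas for arbitrary Boolean functions\<close>

definition fnot :: "formula \<Rightarrow> formula" where
  "fnot s = FMin3 s (FConst True) (FConst False)"

definition fnand :: "formula \<Rightarrow> formula \<Rightarrow> formula" where
  "fnand s t = FMin3 s t (FConst False)"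

definition fmux :: "formula \<Rightarrow> formula \<Rightarrow> formula \<Rightarrow> formula" where
  "fmux c s t = fnand (fnand c s) (fnand (fnot c) t)"

lemma formula_val_fmux:
  "formula_val xs (fmux c s t) = (if formula_val xs c then formula_val xs s else formula_val xs t)"
  by (auto simp: fmux_def fnand_def fnot_def min3_def)

text \<open>The base case is a gate even for a constant function, because a well-formed circuit
  must contain at least one gate.\<close>

fun shannon :: "nat \<Rightarrow> (bool list \<Rightarrow> bool) \<Rightarrow> formula" where
  "shannon 0 f = fnot (FConst (\<not> f []))"
| "shannon (Suc m) f =
     fmux (FVar m) (shannon m (\<lambda>ys. f (ys @ [True]))) (shannon m (\<lambda>ys. f (ys @ [False])))"

lemma vars_shannon: "vars (shannon m f) \<subseteq> {..<m}"
  by (induction m arbitrary: f) (fastforce simp: fmux_def fnand_def fnot_def)+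

lemma gate_count_shannon_pos: "0 < gate_count (shannon m f)"
  by (cases m) (simp_all add: fmux_def fnand_def fnot_def)

lemma formula_val_shannon: "length xs = m \<Longrightarrow> formula_val xs (shannon m f) = f xs"
proof (induction m arbitrary: f xs)
  case 0
  then show ?case by (simp add: fnot_def min3_def)
next
  case (Suc m)
  then obtain ys x where xs: "xs = ys @ [x]" "length ys = m"
    by (metis length_Suc_conv_rev)
  have "formula_val xs (shannon m g) = g ys" for g
    using formula_val_append[of "shannon m g" ys "[x]"] vars_shannon[of m g] Suc.IH[of ys g] xs
    by simp
  then show ?case
    using xs by (cases x) (auto simp: formula_val_fmux nth_append)
qed

lemma robust_circuit_exists:
  assumes "0 \<le> d" "d \<le> 1/200"
  shows "\<exists>C. wf_circuit n C \<and> (\<forall>xs. length xs = n \<longrightarrow> err_prob d C f xs \<le> 2 * d)"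
proof (intro exI conjI allI impI)
  define T where "T = robust (shannon n f)"
  have T_gates: "0 < gate_count T"
    unfolding T_def by (intro gate_count_robust_pos gate_count_shannon_pos)
  show "wf_circuit n (compile T 0)"
    using vars_shannon T_gates unfolding T_def by (intro wf_circuit_compile) auto
  fix xs :: "bool list" assume "length xs = n"
  then have "err_prob d (compile T 0) f xs =
      \<bar>prob_true d xs T - of_bool (formula_val xs (shannon n f))\<bar>"
    using err_prob_compile[of d T] assms T_gates formula_val_shannon by simp
  also have "\<dots> \<le> 2 * d"
    unfolding T_def using assms by (rule prob_true_robust)
  finally show "err_prob d (compile T 0) f xs \<le> 2 * d" .
qed

theorem theorem3p2:
  shows "\<exists>\<delta>0::real. \<delta>0 > 0 \<and>
    (\<forall>\<delta>::real. 0 \<le> \<delta> \<and> \<delta> < \<delta>0 \<longrightarrow>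
      (\<exists>\<epsilon>::real. \<epsilon> > 0 \<and>
        (\<forall>(n::nat) (f::bool list \<Rightarrow> bool). \<exists>C. wf_circuit n C \<and>
           (\<forall>xs. length xs = n \<longrightarrow> err_prob \<delta> C f xs \<le> 1/2 - \<epsilon>))))"
proof (rule exI[of _ "1/200"], intro conjI allI impI)
  fix \<delta> :: real assume \<delta>: "0 \<le> \<delta> \<and> \<delta> < 1/200"
  show "\<exists>\<epsilon>::real. \<epsilon> > 0 \<and> (\<forall>n f. \<exists>C. wf_circuit n C \<and>
      (\<forall>xs. length xs = n \<longrightarrow> err_prob \<delta> C f xs \<le> 1/2 - \<epsilon>))"
  proof (intro exI[of _ "1/4"] conjI allI)
    fix n f
    obtain C where "wf_circuit n C" "\<forall>xs. length xs = n \<longrightarrow> err_prob \<delta> C f xs \<le> 2 * \<delta>"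
      using robust_circuit_exists[of \<delta> n f] \<delta> by auto
    then show "\<exists>C. wf_circuit n C \<and> (\<forall>xs. length xs = n \<longrightarrow> err_prob \<delta> C f xs \<le> 1/2 - 1/4)"
      using \<delta> by force
  qed simp
qed simp

end
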